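(* Let $\mathfrak s$ be a finite-dimensional real solvable Lie algebra with an abelian complex structure $J$, and suppose $\mathfrak s=\mathfrak u+J\mathfrak u$ for some abelian ideal $\mathfrak u$ of $\mathfrak s$. Let $\mathfrak z$ be the center of $\mathfrak s$ (which is $J$-stable). Then $(\mathfrak s/\mathfrak z, J)$, with the induced complex structure, is holomorphically isomorphic to $(\mathfrak{aff}(A),J_{\mathrm{aff}})$ for some finite-dimensional real commutative associative algebra $A$, where $J_{\mathrm{aff}}(a,b)=(b,-a)$.
   Context: An abelian complex structure on a real Lie algebra $\mathfrak g$ is a linear map $J$ with $J^2=-\mathrm{Id}$ and $[Jx,Jy]=[x,y]$ for all $x,y\in\mathfrak g$. For a commutative associative algebra $A$, $\mathfrak{aff}(A)$ is the Lie algebra $A\oplus A$ with bracket $[(a,b),(a',b')]=(aa'-a'a,\ ab'-a'b)=(0,ab'-a'b)$. A holomorphic isomorphism between $(\mathfrak g_1,J_1)$ and $(\mathfrak g_2,J_2)$ is a Lie algebra isomorphism $f$ with $f J_1=J_2 f$. *)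

theory Defs
  imports "HOL-Analysis.Analysis"
begin

definition lie_algebra :: "('a::real_vector \<Rightarrow> 'a \<Rightarrow> 'a) \<Rightarrow> bool" where
  "lie_algebra br \<longleftrightarrow> bilinear br \<and> (\<forall>x. br x x = 0) \<and>
     (\<forall>x y z. br x (br y z) + br y (br z x) + br z (br x y) = 0)"

definition derived :: "('a::real_vector \<Rightarrow> 'a \<Rightarrow> 'a) \<Rightarrow> 'a set \<Rightarrow> 'a set" where
  "derived br V = span {br x y | x y. x \<in> V \<and> y \<in> V}"

definition derived_series :: "('a::real_vector \<Rightarrow> 'a \<Rightarrow> 'a) \<Rightarrow> nat \<Rightarrow> 'a set" where
  "derived_series br n = (derived br ^^ n) UNIV"

definition solvable_lie :: "('a::real_vector \<Rightarrow> 'a \<Rightarrow> 'a) \<Rightarrow> bool" where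
  "solvable_lie br \<longleftrightarrow> (\<exists>n. derived_series br n = {0})"

definition lie_ideal :: "('a::real_vector \<Rightarrow> 'a \<Rightarrow> 'a) \<Rightarrow> 'a set \<Rightarrow> bool" where
  "lie_ideal br u \<longleftrightarrow> subspace u \<and> (\<forall>x y. y \<in> u \<longrightarrow> br x y \<in> u)"

definition abelian_subset :: "('a::real_vector \<Rightarrow> 'a \<Rightarrow> 'a) \<Rightarrow> 'a set \<Rightarrow> bool" where
  "abelian_subset br u \<longleftrightarrow> (\<forall>x\<in>u. \<forall>y\<in>u. br x y = 0)"

definition lie_center :: "('a::real_vector \<Rightarrow> 'a \<Rightarrow> 'a) \<Rightarrow> 'a set" where
  "lie_center br = {x. \<forall>y. br x y = 0}"

definition abelian_complex_structure ::
  "('a::real_vector \<Rightarrow> 'a \<Rightarrow> 'a) \<Rightarrow> ('a \<Rightarrow> 'a) \<Rightarrow> bool" where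
  "abelian_complex_structure br J \<longleftrightarrow> linear J \<and> (\<forall>x. J (J x) = - x) \<and>
     (\<forall>x y. br (J x) (J y) = br x y)"

definition comm_assoc_algebra_on :: "'b::real_vector set \<Rightarrow> ('b \<Rightarrow> 'b \<Rightarrow> 'b) \<Rightarrow> bool" where
  "comm_assoc_algebra_on A m \<longleftrightarrow> subspace A \<and> bilinear m \<and>
     (\<forall>a\<in>A. \<forall>b\<in>A. m a b \<in> A) \<and>
     (\<forall>a\<in>A. \<forall>b\<in>A. m a b = m b a) \<and>
     (\<forall>a\<in>A. \<forall>b\<in>A. \<forall>c\<in>A. m (m a b) c = m a (m b c))"

definition aff_bracket :: "('b \<Rightarrow> 'b \<Rightarrow> 'b) \<Rightarrow> 'b \<times> 'b \<Rightarrow> 'b \<times> 'b \<Rightarrow> 'b::real_vector \<times> 'b" where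
  "aff_bracket m p q = (0, m (fst p) (snd q) - m (fst q) (snd p))"

definition J_aff :: "'b \<times> 'b \<Rightarrow> 'b::real_vector \<times> 'b" where
  "J_aff p = (snd p, - fst p)"

end

(* For a, b in the abelian ideal u put a o b = [J a, b]. This product is commutative because
   [J x, J y] = [x, y], and associative by the Jacobi identity together with
   [J u, J u] = [u, u] = 0. Moreover [a + J b, a' + J b'] = b o a' - b' o a, and a + J b is
   central iff a and b are. So if P is a projection of u with kernel z \<inter> u, then
   a + J b \<longmapsto> (P b, P a) is well defined, has kernel z, and carries the bracket and J of s
   to those of aff(A), where A = P u with product P (a o b) is a copy of the quotient algebra
   u / (z \<inter> u). *)

theory Submission
  imports Defs
begin

lemma subspace_linear_retraction:
  fixes N :: "'a::real_vector set"
  assumes "subspace N"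
  obtains Q where "linear Q" "range Q \<subseteq> N" "\<And>x. x \<in> N \<Longrightarrow> Q x = x"
  using linear_exists_left_inverse_on [OF linear_id assms] by auto

lemma comm_assoc_algebra_on_projection:
  assumes alg: "comm_assoc_algebra_on U m"
    and P: "linear P"
    and "I \<subseteq> U"
    and ideal: "\<And>x y. x \<in> U \<Longrightarrow> y \<in> I \<Longrightarrow> m x y \<in> I"
    and P_I: "\<And>x. x \<in> I \<Longrightarrow> P x = 0"
    and P_congruent: "\<And>x. x \<in> U \<Longrightarrow> P x - x \<in> I"
  shows "comm_assoc_algebra_on (P ` U) (\<lambda>x y. P (m x y))"
proof -
  have U: "subspace U" and m: "bilinear m"
    and closed: "\<And>x y. x \<in> U \<Longrightarrow> y \<in> U \<Longrightarrow> m x y \<in> U"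
    and comm: "\<And>x y. x \<in> U \<Longrightarrow> y \<in> U \<Longrightarrow> m x y = m y x"
    and assoc: "\<And>x y z. x \<in> U \<Longrightarrow> y \<in> U \<Longrightarrow> z \<in> U \<Longrightarrow> m (m x y) z = m x (m y z)"
    using alg by (auto simp: comm_assoc_algebra_on_def)
  have P_U: "P x \<in> U" if "x \<in> U" for x
  proof -
    have "(P x - x) + x \<in> U"
      using P_congruent [OF that] \<open>I \<subseteq> U\<close> that by (blast intro: subspace_add [OF U])
    then show ?thesis
      by simp
  qed
  have P_mult_left: "P (m (P x) y) = P (m x y)" if "x \<in> U" "y \<in> U" for x y
  proof -
    have "m (P x) y - m x y = m y (P x - x)"
      using that P_U comm by (simp add: bilinear_rsub [OF m])
    also have "\<dots> \<in> I"
      using that P_congruent ideal by blast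
    finally have "P (m (P x) y - m x y) = 0"
      by (rule P_I)
    then show ?thesis
      by (simp add: linear_diff [OF P])
  qed
  have "P (m (P (m x y)) z) = P (m x (P (m y z)))" if "x \<in> U" "y \<in> U" "z \<in> U" for x y z
  proof -
    have "P (m (P (m x y)) z) = P (m (m x y) z)"
      using that closed by (simp add: P_mult_left)
    also have "\<dots> = P (m (m y z) x)"
      using that closed comm assoc by metis
    also have "\<dots> = P (m (P (m y z)) x)"
      using that closed by (simp add: P_mult_left)
    also have "\<dots> = P (m x (P (m y z)))"
      using that closed P_U comm by metis
    finally show ?thesis .
  qed
  moreover have "bilinear (\<lambda>x y. P (m x y))"
    using m P unfolding bilinear_def linear_iff by (simp add: linear_add linear_scale)
  moreover have "subspace (P ` U)"
    using P U by (rule linear_subspace_image)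
  ultimately show ?thesis
    unfolding comm_assoc_algebra_on_def using P_U closed comm by auto
qed

locale real_lie_algebra =
  fixes br :: "'a::real_vector \<Rightarrow> 'a \<Rightarrow> 'a"
  assumes lie_algebra: "lie_algebra br"
begin

lemma bilinear: "bilinear br"
  using lie_algebra by (simp add: lie_algebra_def)

lemmas bracket_add = bilinear_ladd [OF bilinear] bilinear_radd [OF bilinear]
lemmas bracket_diff = bilinear_lsub [OF bilinear] bilinear_rsub [OF bilinear]
lemmas bracket_minus = bilinear_lneg [OF bilinear] bilinear_rneg [OF bilinear]
lemmas bracket_zero [simp] = bilinear_lzero [OF bilinear] bilinear_rzero [OF bilinear]

lemma bracket_self [simp]: "br x x = 0"
  using lie_algebra by (simp add: lie_algebra_def)

lemma jacobi: "br x (br y z) + br y (br z x) + br z (br x y) = 0"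
  using lie_algebra by (simp add: lie_algebra_def)

lemma bracket_anticomm: "br y x = - br x y"
proof -
  have "br (x + y) (x + y) = br x x + br x y + (br y x + br y y)"
    by (simp add: bracket_add algebra_simps del: bracket_self)
  then have "br x y + br y x = 0"
    by simp
  then show ?thesis
    by (simp add: add_eq_0_iff)
qed

lemma lie_center_bracket_left: "c \<in> lie_center br \<Longrightarrow> br c y = 0"
  by (simp add: lie_center_def)

lemma lie_center_bracket_right: "c \<in> lie_center br \<Longrightarrow> br y c = 0"
  by (metis bracket_anticomm lie_center_bracket_left neg_0_equal_iff_equal)

lemma subspace_lie_center: "subspace (lie_center br)"
  by (auto simp: subspace_def lie_center_def bracket_add bilinear_lmul [OF bilinear])

lemma bracket_congruent_left: "x - x' \<in> lie_center br \<Longrightarrow> br x y = br x' y"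
  using lie_center_bracket_left [of "x - x'" y] by (simp add: bracket_diff)

lemma bracket_congruent_right: "y - y' \<in> lie_center br \<Longrightarrow> br x y = br x y'"
  using lie_center_bracket_right [of "y - y'" x] by (simp add: bracket_diff)

end

locale abelian_complex_lie = real_lie_algebra +
  fixes J :: "'a::real_vector \<Rightarrow> 'a"
  assumes abelian_complex: "abelian_complex_structure br J"
begin

lemma linear_J: "linear J"
  using abelian_complex by (simp add: abelian_complex_structure_def)

lemma J_J [simp]: "J (J x) = - x"
  using abelian_complex by (simp add: abelian_complex_structure_def)

lemma bracket_J_J [simp]: "br (J x) (J y) = br x y"
  using abelian_complex by (simp add: abelian_complex_structure_def)

lemma bracket_J_left: "br (J x) y = - br x (J y)"
  by (metis J_J bracket_J_J bracket_minus(1))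

lemma bracket_J_swap: "br (J x) y = br (J y) x"
  by (metis bracket_J_left bracket_anticomm)

lemma J_lie_center: "c \<in> lie_center br \<Longrightarrow> J c \<in> lie_center br"
  by (simp add: lie_center_def bracket_J_left)

lemma bilinear_J_product: "bilinear (\<lambda>x y. br (J x) y)"
  using bilinear linear_J unfolding bilinear_def linear_iff by (simp add: linear_add linear_scale)

end

locale abelian_ideal_spanning = abelian_complex_lie +
  fixes u :: "'a::real_vector set"
  assumes lie_ideal: "lie_ideal br u"
    and abelian: "abelian_subset br u"
    and spanning: "UNIV = {x + J y | x y. x \<in> u \<and> y \<in> u}"
begin

lemma subspace_u: "subspace u"
  using lie_ideal by (simp add: lie_ideal_def)

lemma bracket_mem_u: "y \<in> u \<Longrightarrow> br x y \<in> u"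
  using lie_ideal by (simp add: lie_ideal_def)

lemma bracket_u_u: "x \<in> u \<Longrightarrow> y \<in> u \<Longrightarrow> br x y = 0"
  using abelian by (simp add: abelian_subset_def)

lemma subspace_center_u: "subspace (lie_center br \<inter> u)"
  using subspace_lie_center subspace_u by (rule subspace_inter)

lemma decompose:
  obtains a b where "a \<in> u" "b \<in> u" "x = a + J b"
  using spanning by blast

lemma bracket_decomposed:
  assumes "a \<in> u" "b \<in> u" "a' \<in> u" "b' \<in> u"
  shows "br (a + J b) (a' + J b') = br (J b) a' - br (J b') a"
  using assms bracket_u_u bracket_anticomm [of a "J b'"] by (simp add: bracket_add)

lemma decomposed_mem_lie_center_iff:
  assumes a: "a \<in> u" and b: "b \<in> u"
  shows "a + J b \<in> lie_center br \<longleftrightarrow> a \<in> lie_center br \<and> b \<in> lie_center br"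
proof
  assume ab: "a + J b \<in> lie_center br"
  have "br a y = 0" for y
  proof -
    obtain c e where "c \<in> u" "e \<in> u" "y = c + J e"
      by (rule decompose)
    moreover have "br (a + J b) (J e) = 0"
      using ab by (rule lie_center_bracket_left)
    ultimately show ?thesis
      using a b by (simp add: bracket_add bracket_u_u)
  qed
  then have a_center: "a \<in> lie_center br"
    by (simp add: lie_center_def)
  then have "J b \<in> lie_center br"
    using ab subspace_diff [OF subspace_lie_center] by fastforce
  then have "b \<in> lie_center br"
    using J_lie_center subspace_neg [OF subspace_lie_center] by fastforce
  with a_center show "a \<in> lie_center br \<and> b \<in> lie_center br" ..
next
  assume "a \<in> lie_center br \<and> b \<in> lie_center br"
  then show "a + J b \<in> lie_center br"
    by (simp add: J_lie_center subspace_add [OF subspace_lie_center])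
qed

lemma J_product_assoc:
  assumes "p \<in> u" "q \<in> u" "r \<in> u"
  shows "br (J (br (J p) q)) r = br (J p) (br (J q) r)"
proof -
  have "br (J r) (br (J p) q) = - br (J p) (br q (J r)) - br q (br (J r) (J p))"
    using jacobi [of "J r" "J p" q] by (simp add: eq_neg_iff_add_eq_0 algebra_simps)
  also have "\<dots> = br (J p) (br (J r) q)"
    using assms by (simp add: bracket_u_u bracket_anticomm [of q] bracket_minus)
  finally show ?thesis
    by (metis bracket_J_swap)
qed

lemma comm_assoc_algebra_on_u: "comm_assoc_algebra_on u (\<lambda>x y. br (J x) y)"
  unfolding comm_assoc_algebra_on_def
  using subspace_u bilinear_J_product bracket_mem_u bracket_J_swap J_product_assoc by blast

end

(* P realises u / (z \<inter> u) on P ` u, and h chooses the decomposition x = a + J b linearly. *)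
locale aff_coordinates = abelian_ideal_spanning +
  fixes P :: "'a::real_vector \<Rightarrow> 'a" and h :: "'a \<Rightarrow> 'a \<times> 'a"
  assumes linear_P: "linear P"
    and P_center: "x \<in> lie_center br \<inter> u \<Longrightarrow> P x = 0"
    and P_congruent: "P x - x \<in> lie_center br \<inter> u"
    and linear_h: "linear h"
    and h_mem: "h x \<in> u \<times> u"
    and h_decomposes: "fst (h x) + J (snd (h x)) = x"
begin

definition aff_coords :: "'a \<Rightarrow> 'a \<times> 'a" where
  "aff_coords x = (P (snd (h x)), P (fst (h x)))"

definition quotient_mult :: "'a \<Rightarrow> 'a \<Rightarrow> 'a" where
  "quotient_mult p q = P (br (J p) q)"

lemma P_eq_0_iff: "P x = 0 \<longleftrightarrow> x \<in> lie_center br \<inter> u"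
  using P_center P_congruent [of x] subspace_neg [OF subspace_center_u] by force

lemma bracket_J_P_left: "br (J (P x)) y = br (J x) y"
proof (rule bracket_congruent_left)
  show "J (P x) - J x \<in> lie_center br"
    using P_congruent [of x] J_lie_center by (simp add: linear_diff [OF linear_J, symmetric])
qed

lemma bracket_P_right: "br y (P x) = br y x"
  using P_congruent [of x] by (simp add: bracket_congruent_right)

lemma aff_coords_decomposed:
  assumes a: "a \<in> u" and b: "b \<in> u"
  shows "aff_coords (a + J b) = (P b, P a)"
proof -
  obtain a' b' where h: "h (a + J b) = (a', b')"
    by fastforce
  then have a'b': "a' \<in> u" "b' \<in> u" "a' + J b' = a + J b"
    using h_mem [of "a + J b"] h_decomposes [of "a + J b"] by auto
  then have "(a' - a) + J (b' - b) = 0"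
    by (simp add: linear_diff [OF linear_J] algebra_simps)
  then have "a' - a \<in> lie_center br \<and> b' - b \<in> lie_center br"
    using decomposed_mem_lie_center_iff a b a'b' subspace_diff [OF subspace_u]
      subspace_0 [OF subspace_lie_center] by metis
  then have "P (a' - a) = 0" "P (b' - b) = 0"
    using a b a'b' subspace_diff [OF subspace_u] by (auto intro: P_center)
  then show ?thesis
    using h by (simp add: aff_coords_def linear_diff [OF linear_P])
qed

lemma linear_aff_coords: "linear aff_coords"
  unfolding aff_coords_def linear_iff
  by (simp add: linear_add [OF linear_h] linear_scale [OF linear_h]
      linear_add [OF linear_P] linear_scale [OF linear_P])

lemma range_aff_coords: "range aff_coords = P ` u \<times> P ` u"
proof
  show "range aff_coords \<subseteq> P ` u \<times> P ` u"
    using h_mem by (auto simp: aff_coords_def mem_Times_iff)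
  show "P ` u \<times> P ` u \<subseteq> range aff_coords"
  proof clarify
    fix a b assume "b \<in> u" "a \<in> u"
    then have "(P b, P a) = aff_coords (a + J b)"
      by (simp add: aff_coords_decomposed)
    then show "(P b, P a) \<in> range aff_coords"
      by (metis rangeI)
  qed
qed

lemma aff_coords_eq_0_iff: "aff_coords x = 0 \<longleftrightarrow> x \<in> lie_center br"
proof -
  obtain a b where "a \<in> u" "b \<in> u" and x: "x = a + J b"
    by (rule decompose)
  then show ?thesis
    by (auto simp: aff_coords_decomposed P_eq_0_iff decomposed_mem_lie_center_iff zero_prod_def)
qed

lemma aff_coords_bracket:
  "aff_coords (br x y) = aff_bracket quotient_mult (aff_coords x) (aff_coords y)"
proof -
  obtain a b a' b' where u: "a \<in> u" "b \<in> u" "a' \<in> u" "b' \<in> u"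
    and x: "x = a + J b" and y: "y = a' + J b'"
    by (metis decompose)
  have xy: "br x y = br (J b) a' - br (J b') a"
    using u by (simp add: x y bracket_decomposed)
  then have "br x y \<in> u"
    using u bracket_mem_u subspace_diff [OF subspace_u] by simp
  then have "aff_coords (br x y) = (0, P (br x y))"
    using aff_coords_decomposed [of "br x y" 0] subspace_0 [OF subspace_u]
    by (simp add: linear_0 [OF linear_J] linear_0 [OF linear_P])
  moreover have "aff_coords x = (P b, P a)" "aff_coords y = (P b', P a')"
    using u by (simp_all add: x y aff_coords_decomposed)
  ultimately show ?thesis
    by (simp add: xy aff_bracket_def quotient_mult_def bracket_J_P_left bracket_P_right
        linear_diff [OF linear_P])
qed

lemma aff_coords_J: "aff_coords (J x) = J_aff (aff_coords x)"
proof -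
  obtain a b where u: "a \<in> u" "b \<in> u" and x: "x = a + J b"
    by (rule decompose)
  have "aff_coords (J x) = aff_coords (- b + J a)"
    by (simp add: x linear_add [OF linear_J])
  also have "\<dots> = (P a, P (- b))"
    using u subspace_neg [OF subspace_u] by (intro aff_coords_decomposed) auto
  finally have "aff_coords (J x) = (P a, P (- b))" .
  moreover have "aff_coords x = (P b, P a)"
    using u by (simp add: x aff_coords_decomposed)
  ultimately show ?thesis
    by (simp add: J_aff_def linear_neg [OF linear_P])
qed

lemma comm_assoc_algebra_on_quotient: "comm_assoc_algebra_on (P ` u) quotient_mult"
proof -
  have "comm_assoc_algebra_on (P ` u) (\<lambda>x y. P (br (J x) y))"
  proof (rule comm_assoc_algebra_on_projection [OF comm_assoc_algebra_on_u linear_P])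
    show "br (J x) y \<in> lie_center br \<inter> u" if "y \<in> lie_center br \<inter> u" for x y
      using that lie_center_bracket_right subspace_0 [OF subspace_center_u] by simp
  qed (use P_center P_congruent in auto)
  then show ?thesis
    by (simp add: quotient_mult_def [abs_def])
qed

end

context abelian_ideal_spanning
begin

lemma lie_center_quotient_holomorphic_aff:
  "\<exists>(A :: 'a set) m f. comm_assoc_algebra_on A m \<and>
     linear f \<and> range f = A \<times> A \<and> {x. f x = 0} = lie_center br \<and>
     (\<forall>x y. f (br x y) = aff_bracket m (f x) (f y)) \<and> (\<forall>x. f (J x) = J_aff (f x))"
proof -
  obtain Q where Q: "linear Q" "range Q \<subseteq> lie_center br \<inter> u"
    and Q_id: "\<And>x. x \<in> lie_center br \<inter> u \<Longrightarrow> Q x = x"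
    by (metis subspace_linear_retraction [OF subspace_center_u])
  have "linear (\<lambda>p. fst p + J (snd p))"
    unfolding linear_iff
    by (simp add: linear_add [OF linear_J] linear_scale [OF linear_J] scaleR_add_right)
  moreover have "x \<in> (\<lambda>p. fst p + J (snd p)) ` (u \<times> u)" for x
  proof -
    obtain a b where "a \<in> u" "b \<in> u" "x = a + J b"
      by (rule decompose)
    then show ?thesis
      by force
  qed
  ultimately obtain h
    where h: "range h \<subseteq> u \<times> u" "linear h" "\<And>x. fst (h x) + J (snd (h x)) = x"
    using linear_exists_right_inverse_on [OF _ subspace_Times [OF subspace_u subspace_u]] by blast
  interpret aff_coordinates br J u "\<lambda>x. x - Q x" h
  proof (intro aff_coordinates.intro aff_coordinates_axioms.intro abelian_ideal_spanning_axioms)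
    show "linear (\<lambda>x. x - Q x)"
      using linear_ident Q(1) by (rule linear_compose_sub)
    show "x - Q x - x \<in> lie_center br \<inter> u" for x
      using Q(2) subspace_neg [OF subspace_center_u, of "Q x"] by auto
  qed (use Q_id h in auto)
  have "{x. aff_coords x = 0} = lie_center br"
    using aff_coords_eq_0_iff by blast
  then show ?thesis
    using comm_assoc_algebra_on_quotient linear_aff_coords range_aff_coords aff_coords_bracket
      aff_coords_J
    by (intro exI [of _ "(\<lambda>x. x - Q x) ` u"] exI [of _ quotient_mult] exI [of _ aff_coords]) simp
qed

end

theorem mainTheorem2:
  fixes br :: "'a::euclidean_space \<Rightarrow> 'a \<Rightarrow> 'a"
    and J :: "'a \<Rightarrow> 'a"
    and u :: "'a set"
  assumes "lie_algebra br"
    and "solvable_lie br"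
    and "abelian_complex_structure br J"
    and "lie_ideal br u"
    and "abelian_subset br u"
    and "UNIV = {x + J y | x y. x \<in> u \<and> y \<in> u}"
  shows "J ` lie_center br \<subseteq> lie_center br \<and>
    (\<exists>(A :: 'a set) (m :: 'a \<Rightarrow> 'a \<Rightarrow> 'a) (f :: 'a \<Rightarrow> 'a \<times> 'a).
       comm_assoc_algebra_on A m \<and>
       linear f \<and> range f = A \<times> A \<and> {x. f x = 0} = lie_center br \<and>
       (\<forall>x y. f (br x y) = aff_bracket m (f x) (f y)) \<and>
       (\<forall>x. f (J x) = J_aff (f x)))"
proof -
  interpret abelian_ideal_spanning br J u
    using assms(1,3-6) by unfold_locales auto
  show ?thesis
    using J_lie_center lie_center_quotient_holomorphic_aff by blast
qed

end
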